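(* Let $Q_{[n]}=\sum_{\{i,j\}\subseteq[n]}\Gamma_{\{i,j\}}^2$, the sum being over all 2-element subsets of $[n]$. Then $[Q_{[n]},\Gamma_A]=0$ for every $A\subseteq[n]$.
   Context: Fix $n\ge1$ and real parameters $\mu_1,\dots,\mu_n>0$; write $[n]=\{1,\dots,n\}$. For $i\in[n]$, $r_i$ is the reflection $(r_if)(x)=f(x_1,\dots,-x_i,\dots,x_n)$ and $T_i=\partial_{x_i}+\frac{\mu_i}{x_i}(1-r_i)$. $\mathcal{C}\ell_n$ is generated by $e_1,\dots,e_n$ with $e_ie_j+e_je_i=-2\delta_{ij}$, $V$ is a fixed left $\mathcal{C}\ell_n$-module, and operators act on $\mathcal{P}(\mathbb{R}^n)\otimes V$ with $x_i,T_i,r_i$ acting on the polynomial factor and $e_i$ on $V$. For $A\subseteq[n]$: $\underline{D}_A=\sum_{i\in A}e_iT_i$, $\underline{x}_A=\sum_{i\in A}e_ix_i$, $\underline{S}_A=\frac12([\underline{x}_A,\underline{D}_A]-1)$, $\Gamma_A=\underline{S}_A\prod_{i\in A}r_i$ (empty sums $0$, empty products $1$). *)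

theory Defs
  imports "HOL-Analysis.Analysis"
begin

text \<open>Elements of P(R^n) tensor V are represented by their coefficient functions:
  F alpha is the V-valued coefficient of the monomial x^alpha, alpha :: nat => nat an
  exponent vector (only alpha 1, ..., alpha n are relevant; polynomials in n variables
  are those F with finite support on exponent vectors vanishing outside {1..n}).\<close>

type_synonym 'v pv = "(nat \<Rightarrow> nat) \<Rightarrow> 'v"

definition is_poly :: "nat \<Rightarrow> ('v::zero) pv \<Rightarrow> bool" where
  "is_poly n F \<longleftrightarrow> finite {\<alpha>. F \<alpha> \<noteq> 0} \<and> (\<forall>\<alpha>. F \<alpha> \<noteq> 0 \<longrightarrow> (\<forall>i. i \<notin> {1..n} \<longrightarrow> \<alpha> i = 0))"

definition mult_x :: "nat \<Rightarrow> ('v::zero) pv \<Rightarrow> 'v pv" where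
  "mult_x i F = (\<lambda>\<alpha>. if \<alpha> i = 0 then 0 else F (\<alpha>(i := \<alpha> i - 1)))"

text \<open>division by x_i (exact on polynomials divisible by x_i)\<close>
definition div_x :: "nat \<Rightarrow> 'v pv \<Rightarrow> 'v pv" where
  "div_x i F = (\<lambda>\<alpha>. F (\<alpha>(i := Suc (\<alpha> i))))"

definition dx :: "nat \<Rightarrow> ('v::real_vector) pv \<Rightarrow> 'v pv" where
  "dx i F = (\<lambda>\<alpha>. real (Suc (\<alpha> i)) *\<^sub>R F (\<alpha>(i := Suc (\<alpha> i))))"

definition refl :: "nat \<Rightarrow> ('v::real_vector) pv \<Rightarrow> 'v pv" where
  "refl i F = (\<lambda>\<alpha>. ((-1::real) ^ (\<alpha> i)) *\<^sub>R F \<alpha>)"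

definition reflA :: "nat set \<Rightarrow> ('v::real_vector) pv \<Rightarrow> 'v pv" where
  "reflA A F = (\<lambda>\<alpha>. ((-1::real) ^ (\<Sum>i\<in>A. \<alpha> i)) *\<^sub>R F \<alpha>)"

definition dunkl :: "(nat \<Rightarrow> real) \<Rightarrow> nat \<Rightarrow> ('v::real_vector) pv \<Rightarrow> 'v pv" where
  "dunkl \<mu> i F = (\<lambda>\<alpha>. dx i F \<alpha> + \<mu> i *\<^sub>R div_x i (\<lambda>\<beta>. F \<beta> - refl i F \<beta>) \<alpha>)"

definition dirac :: "(nat \<Rightarrow> real) \<Rightarrow> (nat \<Rightarrow> 'v \<Rightarrow> 'v) \<Rightarrow> nat set \<Rightarrow> ('v::real_vector) pv \<Rightarrow> 'v pv" where
  "dirac \<mu> e A F = (\<lambda>\<alpha>. \<Sum>i\<in>A. e i (dunkl \<mu> i F \<alpha>))"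

definition vecx :: "(nat \<Rightarrow> 'v \<Rightarrow> 'v) \<Rightarrow> nat set \<Rightarrow> ('v::real_vector) pv \<Rightarrow> 'v pv" where
  "vecx e A F = (\<lambda>\<alpha>. \<Sum>i\<in>A. e i (mult_x i F \<alpha>))"

definition SA :: "(nat \<Rightarrow> real) \<Rightarrow> (nat \<Rightarrow> 'v \<Rightarrow> 'v) \<Rightarrow> nat set \<Rightarrow> ('v::real_vector) pv \<Rightarrow> 'v pv" where
  "SA \<mu> e A F = (\<lambda>\<alpha>. (1/2::real) *\<^sub>R
      (vecx e A (dirac \<mu> e A F) \<alpha> - dirac \<mu> e A (vecx e A F) \<alpha> - F \<alpha>))"

definition GammaA :: "(nat \<Rightarrow> real) \<Rightarrow> (nat \<Rightarrow> 'v \<Rightarrow> 'v) \<Rightarrow> nat set \<Rightarrow> ('v::real_vector) pv \<Rightarrow> 'v pv" where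
  "GammaA \<mu> e A F = SA \<mu> e A (reflA A F)"

definition Qn :: "(nat \<Rightarrow> real) \<Rightarrow> (nat \<Rightarrow> 'v \<Rightarrow> 'v) \<Rightarrow> nat \<Rightarrow> ('v::real_vector) pv \<Rightarrow> 'v pv" where
  "Qn \<mu> e n F = (\<lambda>\<alpha>. \<Sum>B\<in>{B. B \<subseteq> {1..n} \<and> card B = 2}. GammaA \<mu> e B (GammaA \<mu> e B F) \<alpha>)"

end

theory Submission
  imports Defs
begin

text \<open>The operators x_A and D_A generate a copy of osp(1|2), and 2 S_A = [x_A, D_A] - 1 is twice
  its Scasimir, so it anticommutes with x_A and D_A. The reflection r_A anticommutes with them as
  well, hence Gamma_A commutes with x_A and D_A. For C = [n] - A, the Clifford relations make x_C and
  D_C anticommute with x_A and D_A, while they commute with r_A; so Gamma_A also commutes with x_C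
  and D_C, hence with x_[n], D_[n] and S_[n].

  On the other hand S_B^2 is a sum of terms indexed by one or two elements of B. Summing over all
  two-element subsets B of [n] therefore reproduces S_[n]^2 up to a scalar, because each diagonal
  two-index term combines with the one-index term of the same index into a scalar. Thus
  Q_[n] = S_[n]^2 / 4 + const, which commutes with Gamma_A.\<close>

section \<open>Linear operators on coefficient functions\<close>

text \<open>Function types carry no real_vector instance here, so linearity of operators on
  coefficient functions is spelled out pointwise.\<close>

definition linear_pv :: "('v::real_vector pv \<Rightarrow> 'v pv) \<Rightarrow> bool" where
  "linear_pv f \<longleftrightarrow> (\<forall>F G. f (\<lambda>\<alpha>. F \<alpha> + G \<alpha>) = (\<lambda>\<alpha>. f F \<alpha> + f G \<alpha>))
     \<and> (\<forall>c F. f (\<lambda>\<alpha>. c *\<^sub>R F \<alpha>) = (\<lambda>\<alpha>. c *\<^sub>R f F \<alpha>))"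

lemma linear_pv_add: "linear_pv f \<Longrightarrow> f (\<lambda>\<alpha>. F \<alpha> + G \<alpha>) = (\<lambda>\<alpha>. f F \<alpha> + f G \<alpha>)"
  by (simp add: linear_pv_def)

lemma linear_pv_scaleR: "linear_pv f \<Longrightarrow> f (\<lambda>\<alpha>. c *\<^sub>R F \<alpha>) = (\<lambda>\<alpha>. c *\<^sub>R f F \<alpha>)"
  by (simp add: linear_pv_def)

lemma linear_pv_closed:
  "linear_pv f \<Longrightarrow> linear_pv g \<Longrightarrow> linear_pv (\<lambda>F \<alpha>. f F \<alpha> + g F \<alpha>)"
  "linear_pv f \<Longrightarrow> linear_pv g \<Longrightarrow> linear_pv (\<lambda>F \<alpha>. f F \<alpha> - g F \<alpha>)"
  "linear_pv f \<Longrightarrow> linear_pv (\<lambda>F \<alpha>. - f F \<alpha>)"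
  "linear_pv f \<Longrightarrow> linear_pv (\<lambda>F \<alpha>. c *\<^sub>R f F \<alpha>)"
  "linear_pv f \<Longrightarrow> linear_pv g \<Longrightarrow> linear_pv (\<lambda>F. f (g F))"
  by (auto simp: linear_pv_def algebra_simps)

typedef (overloaded) ('v::real_vector) linop = "{f :: 'v pv \<Rightarrow> 'v pv. linear_pv f}"
  morphisms apply_linop Abs_linop
  by (rule exI[of _ "\<lambda>F. F"]) (simp add: linear_pv_def)

setup_lifting type_definition_linop

instantiation linop :: (real_vector) "{real_algebra, monoid_mult}"
begin
lift_definition zero_linop :: "'a linop" is "\<lambda>F \<alpha>. 0" by (simp add: linear_pv_def)
lift_definition one_linop :: "'a linop" is "\<lambda>F. F" by (simp add: linear_pv_def)
lift_definition plus_linop :: "'a linop \<Rightarrow> 'a linop \<Rightarrow> 'a linop" is "\<lambda>f g F \<alpha>. f F \<alpha> + g F \<alpha>"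
  by (rule linear_pv_closed)
lift_definition minus_linop :: "'a linop \<Rightarrow> 'a linop \<Rightarrow> 'a linop" is "\<lambda>f g F \<alpha>. f F \<alpha> - g F \<alpha>"
  by (rule linear_pv_closed)
lift_definition uminus_linop :: "'a linop \<Rightarrow> 'a linop" is "\<lambda>f F \<alpha>. - f F \<alpha>"
  by (rule linear_pv_closed)
lift_definition scaleR_linop :: "real \<Rightarrow> 'a linop \<Rightarrow> 'a linop" is "\<lambda>c f F \<alpha>. c *\<^sub>R f F \<alpha>"
  by (rule linear_pv_closed)
lift_definition times_linop :: "'a linop \<Rightarrow> 'a linop \<Rightarrow> 'a linop" is "\<lambda>f g F. f (g F)"
  by (rule linear_pv_closed)
instance
proof
  fix a b c :: "'a linop" and r s :: real
  show "a + b + c = a + (b + c)" by transfer (simp add: algebra_simps)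
  show "a + b = b + a" by transfer (simp add: algebra_simps)
  show "0 + a = a" by transfer simp
  show "- a + a = 0" by transfer simp
  show "a - b = a + - b" by transfer simp
  show "r *\<^sub>R (a + b) = r *\<^sub>R a + r *\<^sub>R b" by transfer (simp add: algebra_simps)
  show "(r + s) *\<^sub>R a = r *\<^sub>R a + s *\<^sub>R a" by transfer (simp add: algebra_simps)
  show "r *\<^sub>R s *\<^sub>R a = (r * s) *\<^sub>R a" by transfer simp
  show "1 *\<^sub>R a = a" by transfer simp
  show "a * b * c = a * (b * c)" by transfer simp
  show "(a + b) * c = a * c + b * c" by transfer simp
  show "a * (b + c) = a * b + a * c" by transfer (rule ext, erule linear_pv_add)
  show "r *\<^sub>R a * b = r *\<^sub>R (a * b)" by transfer simp
  show "a * r *\<^sub>R b = r *\<^sub>R (a * b)" by transfer (rule ext, erule linear_pv_scaleR)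
  show "1 * a = a" by transfer simp
  show "a * 1 = a" by transfer simp
qed
end

lemma apply_linop_times: "apply_linop (a * b) = (\<lambda>F. apply_linop a (apply_linop b F))"
  by (simp add: times_linop.rep_eq)

lemma apply_linop_sum: "apply_linop (sum f A) F \<alpha> = (\<Sum>i\<in>A. apply_linop (f i) F \<alpha>)"
  by (induct A rule: infinite_finite_induct) (simp_all add: zero_linop.rep_eq plus_linop.rep_eq)

lemma linop_eqI: "(\<And>F \<alpha>. apply_linop a F \<alpha> = apply_linop b F \<alpha>) \<Longrightarrow> a = b"
  by (metis apply_linop_inject ext)

lemma mult_assoc_rule: "a * b = c \<Longrightarrow> a * (b * w) = c * (w::'a::semigroup_mult)"
  by (simp add: mult.assoc[symmetric])

section \<open>Commutation relations of the elementary operators\<close>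

lemma dunkl_apply:
  "dunkl \<mu> i F \<alpha> = (real (Suc (\<alpha> i)) + \<mu> i * (1 + (-1) ^ \<alpha> i)) *\<^sub>R F (\<alpha>(i := Suc (\<alpha> i)))"
  by (simp add: dunkl_def dx_def div_x_def refl_def algebra_simps)

text \<open>A map on V acts coefficientwise; non-linear maps are sent to the junk value 0.\<close>

definition pointwise :: "('v::real_vector \<Rightarrow> 'v) \<Rightarrow> 'v pv \<Rightarrow> 'v pv" where
  "pointwise f = (if linear f then (\<lambda>F \<alpha>. f (F \<alpha>)) else (\<lambda>F \<alpha>. 0))"

lift_definition mult_x_op :: "nat \<Rightarrow> 'v::real_vector linop" is mult_x
  by (auto simp: linear_pv_def mult_x_def fun_eq_iff)
lift_definition dunkl_op :: "(nat \<Rightarrow> real) \<Rightarrow> nat \<Rightarrow> 'v::real_vector linop" is dunkl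
  by (auto simp: linear_pv_def fun_eq_iff dunkl_apply algebra_simps)
lift_definition refl_op :: "nat \<Rightarrow> 'v::real_vector linop" is refl
  by (auto simp: linear_pv_def fun_eq_iff refl_def algebra_simps)
lift_definition reflA_op :: "nat set \<Rightarrow> 'v::real_vector linop" is reflA
  by (auto simp: linear_pv_def fun_eq_iff reflA_def algebra_simps)
lift_definition pointwise_op :: "('v::real_vector \<Rightarrow> 'v) \<Rightarrow> 'v linop" is pointwise
  by (auto simp: linear_pv_def pointwise_def fun_eq_iff linear_add linear_scale)

lemma apply_pointwise_op: "linear f \<Longrightarrow> apply_linop (pointwise_op f) F \<alpha> = f (F \<alpha>)"
  by (simp add: pointwise_op.rep_eq pointwise_def)

lemma mult_x_op_commute: "mult_x_op i * mult_x_op j = (mult_x_op j * mult_x_op i :: 'v::real_vector linop)"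
  by (rule linop_eqI) (auto simp: apply_linop_times mult_x_op.rep_eq mult_x_def fun_upd_twist)

lemma dunkl_op_commute: "dunkl_op \<mu> i * dunkl_op \<mu> j = (dunkl_op \<mu> j * dunkl_op \<mu> i :: 'v::real_vector linop)"
  by (rule linop_eqI) (auto simp: apply_linop_times dunkl_op.rep_eq dunkl_apply fun_upd_twist)

lemma dunkl_mult_x_op_commute:
  "i \<noteq> j \<Longrightarrow> dunkl_op \<mu> i * mult_x_op j = (mult_x_op j * dunkl_op \<mu> i :: 'v::real_vector linop)"
  by (rule linop_eqI)
    (auto simp: apply_linop_times dunkl_op.rep_eq mult_x_op.rep_eq dunkl_apply mult_x_def fun_upd_twist)

lemma dunkl_mult_x_op_same:
  "dunkl_op \<mu> i * mult_x_op i
     = (mult_x_op i * dunkl_op \<mu> i + 1 + (2 * \<mu> i) *\<^sub>R refl_op i :: 'v::real_vector linop)"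
proof (rule linop_eqI)
  fix F :: "'v pv" and \<alpha>
  have collect: "a *\<^sub>R v + v = (a + 1) *\<^sub>R v" "v + (b *\<^sub>R v + w) = (1 + b) *\<^sub>R v + w"
    "a *\<^sub>R v + (v + w) = (a + 1) *\<^sub>R v + w" "a *\<^sub>R v + (b *\<^sub>R v + w) = (a + b) *\<^sub>R v + w"
    for a b :: real and v w :: 'v
    by (simp_all add: scaleR_add_left)
  show "apply_linop (dunkl_op \<mu> i * mult_x_op i) F \<alpha>
    = apply_linop (mult_x_op i * dunkl_op \<mu> i + 1 + (2 * \<mu> i) *\<^sub>R refl_op i) F \<alpha>"
  proof (cases "\<alpha> i")
    case 0
    then show ?thesis
      by (simp add: apply_linop_times dunkl_op.rep_eq mult_x_op.rep_eq refl_op.rep_eq plus_linop.rep_eq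
          one_linop.rep_eq scaleR_linop.rep_eq dunkl_apply mult_x_def refl_def algebra_simps fun_upd_idem)
  next
    case (Suc k)
    then show ?thesis
      by (simp add: apply_linop_times dunkl_op.rep_eq mult_x_op.rep_eq refl_op.rep_eq plus_linop.rep_eq
          one_linop.rep_eq scaleR_linop.rep_eq dunkl_apply mult_x_def refl_def fun_upd_idem collect)
        (simp only: scaleR_diff_left[symmetric] scaleR_cancel_right, rule disjI1, simp add: algebra_simps)
  qed
qed

lemma refl_op_square: "refl_op i * refl_op i = (1 :: 'v::real_vector linop)"
  by (rule linop_eqI)
    (simp add: apply_linop_times refl_op.rep_eq one_linop.rep_eq refl_def flip: power_mult_distrib)

lemma refl_mult_x_op_anticommute: "refl_op i * mult_x_op i = - (mult_x_op i * refl_op i :: 'v::real_vector linop)"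
  by (rule linop_eqI)
    (auto simp: apply_linop_times refl_op.rep_eq mult_x_op.rep_eq uminus_linop.rep_eq refl_def mult_x_def
      gr0_conv_Suc)

lemma refl_dunkl_op_anticommute: "refl_op i * dunkl_op \<mu> i = - (dunkl_op \<mu> i * refl_op i :: 'v::real_vector linop)"
  by (rule linop_eqI)
    (auto simp: apply_linop_times refl_op.rep_eq dunkl_op.rep_eq uminus_linop.rep_eq refl_def dunkl_apply)

lemma refl_mult_x_op_commute:
  "i \<noteq> j \<Longrightarrow> refl_op i * mult_x_op j = (mult_x_op j * refl_op i :: 'v::real_vector linop)"
  by (rule linop_eqI) (auto simp: apply_linop_times refl_op.rep_eq mult_x_op.rep_eq refl_def mult_x_def)

lemma refl_dunkl_op_commute:
  "i \<noteq> j \<Longrightarrow> refl_op i * dunkl_op \<mu> j = (dunkl_op \<mu> j * refl_op i :: 'v::real_vector linop)"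
  by (rule linop_eqI) (auto simp: apply_linop_times refl_op.rep_eq dunkl_op.rep_eq refl_def dunkl_apply)

lemma reflA_op_square: "reflA_op A * reflA_op A = (1 :: 'v::real_vector linop)"
  by (rule linop_eqI)
    (simp add: apply_linop_times reflA_op.rep_eq one_linop.rep_eq reflA_def flip: power_mult_distrib)

lemma sum_if_eq_in:
  "finite A \<Longrightarrow> i \<in> A \<Longrightarrow> (\<Sum>j\<in>A. if j = i then v else \<alpha> j) = v + (\<Sum>j\<in>A - {i}. \<alpha> j)"
  by (simp add: sum.remove)

lemma sum_if_eq_notin: "i \<notin> A \<Longrightarrow> (\<Sum>j\<in>A. if j = i then v else \<alpha> j) = sum \<alpha> A"
  by (rule sum.cong) auto

lemma reflA_mult_x_op_anticommute:
  "finite A \<Longrightarrow> i \<in> A \<Longrightarrow> reflA_op A * mult_x_op i = - (mult_x_op i * reflA_op A :: 'v::real_vector linop)"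
  by (rule linop_eqI)
    (auto simp: apply_linop_times reflA_op.rep_eq mult_x_op.rep_eq uminus_linop.rep_eq reflA_def mult_x_def
      gr0_conv_Suc sum_if_eq_in sum.remove[of A i])

lemma reflA_dunkl_op_anticommute:
  "finite A \<Longrightarrow> i \<in> A \<Longrightarrow> reflA_op A * dunkl_op \<mu> i = - (dunkl_op \<mu> i * reflA_op A :: 'v::real_vector linop)"
  by (rule linop_eqI)
    (auto simp: apply_linop_times reflA_op.rep_eq dunkl_op.rep_eq uminus_linop.rep_eq reflA_def dunkl_apply
      sum_if_eq_in sum.remove[of A i])

lemma reflA_mult_x_op_commute:
  "i \<notin> A \<Longrightarrow> reflA_op A * mult_x_op i = (mult_x_op i * reflA_op A :: 'v::real_vector linop)"
  by (rule linop_eqI)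
    (auto simp: apply_linop_times reflA_op.rep_eq mult_x_op.rep_eq reflA_def mult_x_def sum_if_eq_notin)

lemma reflA_dunkl_op_commute:
  "i \<notin> A \<Longrightarrow> reflA_op A * dunkl_op \<mu> i = (dunkl_op \<mu> i * reflA_op A :: 'v::real_vector linop)"
  by (rule linop_eqI)
    (auto simp: apply_linop_times reflA_op.rep_eq dunkl_op.rep_eq reflA_def dunkl_apply sum_if_eq_notin)

lemma pointwise_op_commute_mult_x:
  "linear f \<Longrightarrow> pointwise_op f * mult_x_op j = (mult_x_op j * pointwise_op f :: 'v::real_vector linop)"
  by (rule linop_eqI) (auto simp: apply_linop_times apply_pointwise_op mult_x_op.rep_eq mult_x_def linear_0)

lemma pointwise_op_commute_dunkl:
  "linear f \<Longrightarrow> pointwise_op f * dunkl_op \<mu> j = (dunkl_op \<mu> j * pointwise_op f :: 'v::real_vector linop)"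
  by (rule linop_eqI) (auto simp: apply_linop_times apply_pointwise_op dunkl_op.rep_eq dunkl_apply linear_scale)

lemma pointwise_op_commute_refl:
  "linear f \<Longrightarrow> pointwise_op f * refl_op j = (refl_op j * pointwise_op f :: 'v::real_vector linop)"
  by (rule linop_eqI) (auto simp: apply_linop_times apply_pointwise_op refl_op.rep_eq refl_def linear_scale)

lemma pointwise_op_commute_reflA:
  "linear f \<Longrightarrow> pointwise_op f * reflA_op A = (reflA_op A * pointwise_op f :: 'v::real_vector linop)"
  by (rule linop_eqI) (auto simp: apply_linop_times apply_pointwise_op reflA_op.rep_eq reflA_def linear_scale)

lemma pointwise_op_anticommutator:
  assumes "linear f" "linear g" "\<And>v. f (g v) + g (f v) = c *\<^sub>R v"
  shows "pointwise_op f * pointwise_op g + pointwise_op g * pointwise_op f = c *\<^sub>R (1 :: 'v::real_vector linop)"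
  by (rule linop_eqI)
    (simp add: assms apply_linop_times apply_pointwise_op plus_linop.rep_eq scaleR_linop.rep_eq one_linop.rep_eq)

text \<open>The relations acting on a right factor, for rewriting inside products kept right-associated
  by mult.assoc.\<close>

lemmas mult_x_op_commute_left = mult_x_op_commute[THEN mult_assoc_rule, unfolded mult.assoc]
lemmas dunkl_op_commute_left = dunkl_op_commute[THEN mult_assoc_rule, unfolded mult.assoc]
lemmas dunkl_mult_x_op_commute_left = dunkl_mult_x_op_commute[THEN mult_assoc_rule, unfolded mult.assoc]
lemmas dunkl_mult_x_op_same_left = dunkl_mult_x_op_same[THEN mult_assoc_rule, unfolded mult.assoc]
lemmas refl_op_square_left = refl_op_square[THEN mult_assoc_rule, unfolded mult.assoc]
lemmas refl_mult_x_op_anticommute_left = refl_mult_x_op_anticommute[THEN mult_assoc_rule, unfolded mult.assoc]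
lemmas refl_dunkl_op_anticommute_left = refl_dunkl_op_anticommute[THEN mult_assoc_rule, unfolded mult.assoc]
lemmas refl_mult_x_op_commute_left = refl_mult_x_op_commute[THEN mult_assoc_rule, unfolded mult.assoc]
lemmas refl_dunkl_op_commute_left = refl_dunkl_op_commute[THEN mult_assoc_rule, unfolded mult.assoc]

definition grading_op :: "(nat \<Rightarrow> real) \<Rightarrow> nat \<Rightarrow> 'v::real_vector linop" where
  "grading_op \<mu> i = - (mult_x_op i * dunkl_op \<mu> i + dunkl_op \<mu> i * mult_x_op i)"

lemma grading_op_eq:
  "grading_op \<mu> i = - (2 *\<^sub>R (mult_x_op i * dunkl_op \<mu> i) + 1 + (2 * \<mu> i) *\<^sub>R refl_op i)"
  by (simp add: grading_op_def dunkl_mult_x_op_same scaleR_2 algebra_simps)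

lemma grading_op_mult_x_op: "grading_op \<mu> i * mult_x_op i - mult_x_op i * grading_op \<mu> i = - (2 *\<^sub>R mult_x_op i)"
  by (simp add: grading_op_def algebra_simps dunkl_mult_x_op_same dunkl_mult_x_op_same_left
      refl_mult_x_op_anticommute refl_mult_x_op_anticommute_left scaleR_2)

lemma grading_op_dunkl_op: "grading_op \<mu> i * dunkl_op \<mu> i - dunkl_op \<mu> i * grading_op \<mu> i = 2 *\<^sub>R dunkl_op \<mu> i"
  by (simp add: grading_op_def algebra_simps dunkl_mult_x_op_same dunkl_mult_x_op_same_left
      refl_dunkl_op_anticommute refl_dunkl_op_anticommute_left scaleR_2)

lemma grading_op_mult_x_op_commute:
  assumes "k \<noteq> i" shows "grading_op \<mu> k * mult_x_op i = mult_x_op i * grading_op \<mu> k"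
  using assms not_sym[OF assms]
  by (simp add: grading_op_eq algebra_simps dunkl_mult_x_op_commute dunkl_mult_x_op_commute_left
      mult_x_op_commute mult_x_op_commute_left refl_mult_x_op_commute refl_mult_x_op_commute_left)

lemma grading_op_dunkl_op_commute:
  assumes "k \<noteq> i" shows "grading_op \<mu> k * dunkl_op \<mu> i = dunkl_op \<mu> i * grading_op \<mu> k"
  using assms not_sym[OF assms]
  by (simp add: grading_op_eq algebra_simps dunkl_mult_x_op_commute dunkl_mult_x_op_commute_left
      dunkl_op_commute dunkl_op_commute_left refl_dunkl_op_commute refl_dunkl_op_commute_left)

section \<open>The Scasimir of osp(1|2) in an arbitrary algebra\<close>

lemma scaleR_four: "4 *\<^sub>R w = w + (w + (w + (w::'a::real_vector)))"
  using scaleR_add_left[of 2 2 w] by (simp add: scaleR_2 add.assoc)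

text \<open>With Z = xD + Dx acting as a grading ([Z, x] = -2x, [Z, D] = 2D), the element
  S = [x, D] - 1 is twice the Scasimir of the osp(1|2) generated by x and D.\<close>

lemma osp12_scasimir:
  fixes x D Z :: "'a::{real_algebra, monoid_mult}"
  assumes D_x: "D * x = Z - x * D" and x_Z: "x * Z = Z * x + 2 *\<^sub>R x" and D_Z: "D * Z = Z * D - 2 *\<^sub>R D"
  shows anticommute_x: "(x*D - D*x - 1) * x = - (x * (x*D - D*x - 1))"
    and anticommute_D: "(x*D - D*x - 1) * D = - (D * (x*D - D*x - 1))"
    and square: "(x*D - D*x - 1) * (x*D - D*x - 1)
      = 2 *\<^sub>R (x*D - D*x - 1) + (Z + 2 *\<^sub>R 1) * (Z + 2 *\<^sub>R 1) - 1 - 4 *\<^sub>R (x * (x * (D * D)))"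
proof -
  note D_x' = D_x[THEN mult_assoc_rule, unfolded left_diff_distrib]
  note x_Z' = x_Z[THEN mult_assoc_rule, unfolded distrib_right mult_scaleR_left]
  note D_Z' = D_Z[THEN mult_assoc_rule, unfolded left_diff_distrib mult_scaleR_left]
  show "(x*D - D*x - 1) * x = - (x * (x*D - D*x - 1))"
    by (simp add: algebra_simps D_x D_x' x_Z x_Z' scaleR_2)
  show "(x*D - D*x - 1) * D = - (D * (x*D - D*x - 1))"
    by (simp add: algebra_simps D_x D_x' x_Z x_Z' D_Z D_Z' scaleR_2)
  show "(x*D - D*x - 1) * (x*D - D*x - 1)
      = 2 *\<^sub>R (x*D - D*x - 1) + (Z + 2 *\<^sub>R 1) * (Z + 2 *\<^sub>R 1) - 1 - 4 *\<^sub>R (x * (x * (D * D)))"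
    by (simp add: algebra_simps D_x D_x' x_Z x_Z' D_Z D_Z' scaleR_2 scaleR_four)
qed

section \<open>Sums over two-element subsets\<close>

lemma sum_sum_diagonal:
  assumes "finite A" "\<And>i j. i \<in> A \<Longrightarrow> j \<in> A \<Longrightarrow> f i j = (if i = j then d i else (0::'a::comm_monoid_add))"
  shows "(\<Sum>i\<in>A. \<Sum>j\<in>A. f i j) = (\<Sum>i\<in>A. d i)"
proof -
  have "(\<Sum>i\<in>A. \<Sum>j\<in>A. f i j) = (\<Sum>i\<in>A. \<Sum>j\<in>A. if i = j then d i else 0)"
    using assms(2) by (intro sum.cong refl) auto
  also have "\<dots> = (\<Sum>i\<in>A. d i)" using assms(1) by simp
  finally show ?thesis .
qed

lemma sum_sum_symmetric_diagonal:
  fixes f :: "'b \<Rightarrow> 'b \<Rightarrow> 'a::real_vector"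
  assumes "finite A" "\<And>i j. i \<in> A \<Longrightarrow> j \<in> A \<Longrightarrow> f i j + f j i = (if i = j then 2 *\<^sub>R d i else 0)"
  shows "(\<Sum>i\<in>A. \<Sum>j\<in>A. f i j) = (\<Sum>i\<in>A. d i)"
proof -
  have "2 *\<^sub>R (\<Sum>i\<in>A. \<Sum>j\<in>A. f i j) = (\<Sum>i\<in>A. \<Sum>j\<in>A. f i j) + (\<Sum>i\<in>A. \<Sum>j\<in>A. f j i)"
    using sum.swap[of "\<lambda>i j. f j i" A A] by (simp add: scaleR_2)
  also have "\<dots> = (\<Sum>i\<in>A. \<Sum>j\<in>A. f i j + f j i)" by (simp add: sum.distrib)
  also have "\<dots> = (\<Sum>i\<in>A. 2 *\<^sub>R d i)" using assms by (intro sum_sum_diagonal) auto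
  also have "\<dots> = 2 *\<^sub>R (\<Sum>i\<in>A. d i)" by (simp add: scaleR_sum_right)
  finally show ?thesis by simp
qed

definition two_subsets :: "nat \<Rightarrow> nat set set" where
  "two_subsets n = {B. B \<subseteq> {1..n} \<and> card B = 2}"

lemma finite_two_subsets: "finite (two_subsets n)"
  unfolding two_subsets_def by (rule finite_subset[of _ "Pow {1..n}"]) auto

lemma two_subsets_Suc: "two_subsets (Suc n) = two_subsets n \<union> (\<lambda>k. {k, Suc n}) ` {1..n}"
proof (intro equalityI subsetI)
  fix B assume "B \<in> two_subsets (Suc n)"
  then obtain a b where B: "B = {a, b}" "a \<noteq> b" "{a, b} \<subseteq> {1..Suc n}"
    unfolding two_subsets_def by (metis (mono_tags) card_2_iff mem_Collect_eq)
  show "B \<in> two_subsets n \<union> (\<lambda>k. {k, Suc n}) ` {1..n}"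
  proof (cases "Suc n \<in> B")
    case False
    then show ?thesis using B by (auto simp: two_subsets_def le_Suc_eq)
  next
    case True
    then have "B = {b, Suc n} \<and> b \<in> {1..n} \<or> B = {a, Suc n} \<and> a \<in> {1..n}"
      using B by (auto simp: le_Suc_eq)
    then show ?thesis by blast
  qed
qed (auto simp: two_subsets_def)

lemma sum_two_subsets_Suc:
  "(\<Sum>B\<in>two_subsets (Suc n). \<phi> B) = (\<Sum>B\<in>two_subsets n. \<phi> B) + (\<Sum>k\<in>{1..n}. \<phi> {k, Suc n})"
proof -
  have disjoint: "two_subsets n \<inter> (\<lambda>k. {k, Suc n}) ` {1..n} = {}" by (auto simp: two_subsets_def)
  have inj: "inj_on (\<lambda>k. {k, Suc n}) {1..n}" by (auto simp: inj_on_def doubleton_eq_iff)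
  show ?thesis
    unfolding two_subsets_Suc sum.union_disjoint[OF finite_two_subsets finite_imageI[OF finite_atLeastAtMost] disjoint]
      sum.reindex[OF inj] o_def ..
qed

lemma sum_two_subsets_sum:
  fixes g :: "nat \<Rightarrow> 'a::real_vector"
  shows "(\<Sum>B\<in>two_subsets n. \<Sum>k\<in>B. g k) = (real n - 1) *\<^sub>R (\<Sum>k\<in>{1..n}. g k)"
proof (induct n)
  case 0 then show ?case by (simp add: two_subsets_def)
next
  case (Suc n)
  have "(\<Sum>B\<in>two_subsets (Suc n). \<Sum>k\<in>B. g k)
      = (real n - 1) *\<^sub>R (\<Sum>k\<in>{1..n}. g k) + (\<Sum>k\<in>{1..n}. g k + g (Suc n))"
    by (simp add: sum_two_subsets_Suc Suc)
  also have "\<dots> = (real (Suc n) - 1) *\<^sub>R (\<Sum>k\<in>{1..Suc n}. g k)"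
    by (simp add: sum.distrib atLeastAtMostSuc_conv algebra_simps scaleR_add_left scaleR_diff_left sum_constant_scaleR)
  finally show ?case .
qed

lemma sum_two_subsets_double_sum:
  fixes h :: "nat \<Rightarrow> nat \<Rightarrow> 'a::real_vector"
  shows "(\<Sum>B\<in>two_subsets n. \<Sum>k\<in>B. \<Sum>l\<in>B. h k l)
    = (\<Sum>k\<in>{1..n}. \<Sum>l\<in>{1..n}. h k l) + (real n - 2) *\<^sub>R (\<Sum>k\<in>{1..n}. h k k)"
proof (induct n)
  case 0 then show ?case by (simp add: two_subsets_def)
next
  case (Suc n)
  let ?m = "Suc n"
  have "(\<Sum>B\<in>two_subsets ?m. \<Sum>k\<in>B. \<Sum>l\<in>B. h k l)
      = (\<Sum>k\<in>{1..n}. \<Sum>l\<in>{1..n}. h k l) + (real n - 2) *\<^sub>R (\<Sum>k\<in>{1..n}. h k k)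
        + (\<Sum>k\<in>{1..n}. h k k + h k ?m + h ?m k + h ?m ?m)"
    by (simp add: sum_two_subsets_Suc Suc algebra_simps)
  also have "\<dots> = (\<Sum>k\<in>{1..?m}. \<Sum>l\<in>{1..?m}. h k l) + (real ?m - 2) *\<^sub>R (\<Sum>k\<in>{1..?m}. h k k)"
    by (simp add: sum.distrib atLeastAtMostSuc_conv algebra_simps scaleR_add_left scaleR_diff_left
        sum_constant_scaleR scaleR_2)
  finally show ?case .
qed

section \<open>Clifford-valued operators\<close>

definition vecx_op :: "(nat \<Rightarrow> 'v \<Rightarrow> 'v) \<Rightarrow> nat set \<Rightarrow> 'v::real_vector linop" where
  "vecx_op e A = (\<Sum>i\<in>A. pointwise_op (e i) * mult_x_op i)"

definition dirac_op :: "(nat \<Rightarrow> real) \<Rightarrow> (nat \<Rightarrow> 'v \<Rightarrow> 'v) \<Rightarrow> nat set \<Rightarrow> 'v::real_vector linop" where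
  "dirac_op \<mu> e A = (\<Sum>i\<in>A. pointwise_op (e i) * dunkl_op \<mu> i)"

text \<open>Twice the operator S_A, which avoids the factor 1/2 in the algebra.\<close>

definition scasimir_op :: "(nat \<Rightarrow> real) \<Rightarrow> (nat \<Rightarrow> 'v \<Rightarrow> 'v) \<Rightarrow> nat set \<Rightarrow> 'v::real_vector linop" where
  "scasimir_op \<mu> e A = vecx_op e A * dirac_op \<mu> e A - dirac_op \<mu> e A * vecx_op e A - 1"

definition Gamma_op :: "(nat \<Rightarrow> real) \<Rightarrow> (nat \<Rightarrow> 'v \<Rightarrow> 'v) \<Rightarrow> nat set \<Rightarrow> 'v::real_vector linop" where
  "Gamma_op \<mu> e A = (1/2::real) *\<^sub>R (scasimir_op \<mu> e A * reflA_op A)"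

definition Q_op :: "(nat \<Rightarrow> real) \<Rightarrow> (nat \<Rightarrow> 'v \<Rightarrow> 'v) \<Rightarrow> nat \<Rightarrow> 'v::real_vector linop" where
  "Q_op \<mu> e n = (\<Sum>B\<in>two_subsets n. Gamma_op \<mu> e B * Gamma_op \<mu> e B)"

locale clifford_dunkl =
  fixes \<mu> :: "nat \<Rightarrow> real" and e :: "nat \<Rightarrow> 'v::real_vector \<Rightarrow> 'v" and n :: nat
  assumes linear_e: "\<forall>i\<in>{1..n}. linear (e i)"
    and clifford: "\<forall>i\<in>{1..n}. \<forall>j\<in>{1..n}. \<forall>v. e i (e j v) + e j (e i v) = (if i = j then (-2) *\<^sub>R v else 0)"
begin

abbreviation "N \<equiv> {1..n}"
abbreviation E :: "nat \<Rightarrow> 'v linop" where "E i \<equiv> pointwise_op (e i)"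
abbreviation X :: "nat \<Rightarrow> 'v linop" where "X \<equiv> mult_x_op"
abbreviation T :: "nat \<Rightarrow> 'v linop" where "T \<equiv> dunkl_op \<mu>"
abbreviation x_A :: "nat set \<Rightarrow> 'v linop" where "x_A \<equiv> vecx_op e"
abbreviation D_A :: "nat set \<Rightarrow> 'v linop" where "D_A \<equiv> dirac_op \<mu> e"
abbreviation S_A :: "nat set \<Rightarrow> 'v linop" where "S_A \<equiv> scasimir_op \<mu> e"
abbreviation Z_A :: "nat set \<Rightarrow> 'v linop" where "Z_A A \<equiv> \<Sum>k\<in>A. grading_op \<mu> k"

lemma finite_subset_N: "A \<subseteq> N \<Longrightarrow> finite A"
  using finite_subset by blast

lemma linear_e_i: "i \<in> N \<Longrightarrow> linear (e i)"
  using linear_e by blast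

lemma clifford_square: "i \<in> N \<Longrightarrow> E i * E i = - 1"
proof -
  assume i: "i \<in> N"
  have "E i * E i + E i * E i = (-2) *\<^sub>R 1"
    by (rule pointwise_op_anticommutator) (use i linear_e_i clifford in auto)
  then have "2 *\<^sub>R (E i * E i) = 2 *\<^sub>R (- 1)"
    by (simp add: scaleR_2)
  then show ?thesis
    using scaleR_left_imp_eq[of 2 "E i * E i" "- 1"] by simp
qed

lemma clifford_anticommute: "i \<in> N \<Longrightarrow> j \<in> N \<Longrightarrow> i \<noteq> j \<Longrightarrow> E j * E i = - (E i * E j)"
proof -
  assume "i \<in> N" "j \<in> N" "i \<noteq> j"
  then have "E i * E j + E j * E i = 0 *\<^sub>R 1"
    by (intro pointwise_op_anticommutator) (use linear_e_i clifford in auto)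
  then show ?thesis
    by (simp add: eq_neg_iff_add_eq_0 add.commute)
qed

lemma mult_x_op_commute_E: "i \<in> N \<Longrightarrow> X j * E i = E i * X j"
  by (simp add: pointwise_op_commute_mult_x linear_e_i)

lemma dunkl_op_commute_E: "i \<in> N \<Longrightarrow> T j * E i = E i * T j"
  by (simp add: pointwise_op_commute_dunkl linear_e_i)

lemma grading_op_commute_E: "i \<in> N \<Longrightarrow> grading_op \<mu> k * E i = E i * grading_op \<mu> k"
  by (simp add: grading_op_eq algebra_simps linear_e_i pointwise_op_commute_mult_x
      pointwise_op_commute_dunkl pointwise_op_commute_refl pointwise_op_commute_mult_x[THEN mult_assoc_rule]
      pointwise_op_commute_dunkl[THEN mult_assoc_rule] pointwise_op_commute_refl[THEN mult_assoc_rule])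

lemma reflA_op_commute_E: "i \<in> N \<Longrightarrow> reflA_op A * E i = E i * reflA_op A"
  by (simp add: pointwise_op_commute_reflA linear_e_i)

lemmas clifford_square_left = clifford_square[THEN mult_assoc_rule, simplified]

lemma clifford_anticommute_left:
  assumes "i \<in> N" "j \<in> N" "i \<noteq> j"
  shows "E j * (E i * w) = - (E i * (E j * w))"
  using mult_assoc_rule[OF clifford_anticommute[OF assms]] by (simp add: mult.assoc)

lemmas mult_x_op_commute_E_left = mult_x_op_commute_E[THEN mult_assoc_rule, unfolded mult.assoc]
lemmas dunkl_op_commute_E_left = dunkl_op_commute_E[THEN mult_assoc_rule, unfolded mult.assoc]
lemmas reflA_op_commute_E_left = reflA_op_commute_E[THEN mult_assoc_rule, unfolded mult.assoc]

lemma vecx_dirac_expand: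
  "A \<subseteq> N \<Longrightarrow> x_A A * D_A A = (\<Sum>i\<in>A. \<Sum>j\<in>A. E i * (E j * (X i * T j)))"
  unfolding vecx_op_def dirac_op_def sum_product
  by (intro sum.cong refl) (auto simp: mult.assoc mult_x_op_commute_E_left)

lemma dirac_vecx_expand:
  "A \<subseteq> N \<Longrightarrow> D_A A * x_A A = (\<Sum>i\<in>A. \<Sum>j\<in>A. E j * (E i * (T j * X i)))"
  unfolding vecx_op_def dirac_op_def sum_product
  by (subst sum.swap, intro sum.cong refl) (auto simp: mult.assoc dunkl_op_commute_E_left)

lemma vecx_dirac_anticommutator:
  assumes "A \<subseteq> N"
  shows "x_A A * D_A A + D_A A * x_A A = Z_A A"
proof -
  have "x_A A * D_A A + D_A A * x_A A =
     (\<Sum>i\<in>A. \<Sum>j\<in>A. E i * (E j * (X i * T j)) + E j * (E i * (T j * X i)))"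
    by (simp add: vecx_dirac_expand[OF assms] dirac_vecx_expand[OF assms] sum.distrib)
  also have "\<dots> = Z_A A"
  proof (rule sum_sum_diagonal[OF finite_subset_N[OF assms]])
    fix i j assume "i \<in> A" "j \<in> A"
    then have i: "i \<in> N" and j: "j \<in> N" using assms by auto
    show "E i * (E j * (X i * T j)) + E j * (E i * (T j * X i)) = (if i = j then grading_op \<mu> i else 0)"
    proof (cases "i = j")
      case True
      then show ?thesis using i by (simp add: clifford_square_left grading_op_def)
    next
      case False
      then show ?thesis
        using i j by (simp add: clifford_anticommute_left[OF i j False] dunkl_mult_x_op_commute[OF not_sym] mult.assoc)
    qed
  qed
  finally show ?thesis .
qed

lemma clifford_sum_square:
  assumes A: "A \<subseteq> N"
    and Y_E: "\<And>i j. i \<in> N \<Longrightarrow> Y j * E i = E i * Y j"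
    and Y_Y: "\<And>i j. Y i * Y j = Y j * Y i"
  shows "(\<Sum>i\<in>A. E i * Y i) * (\<Sum>i\<in>A. E i * Y i) = - (\<Sum>i\<in>A. Y i * Y i)"
proof -
  have "(\<Sum>i\<in>A. E i * Y i) * (\<Sum>i\<in>A. E i * Y i) = (\<Sum>i\<in>A. \<Sum>j\<in>A. E i * (E j * (Y i * Y j)))"
    unfolding sum_product
    by (intro sum.cong refl) (use A in \<open>auto simp: mult.assoc Y_E[THEN mult_assoc_rule, unfolded mult.assoc]\<close>)
  also have "\<dots> = (\<Sum>i\<in>A. - (Y i * Y i))"
  proof (rule sum_sum_symmetric_diagonal[OF finite_subset_N[OF A]])
    fix i j assume "i \<in> A" "j \<in> A"
    then have i: "i \<in> N" and j: "j \<in> N" using A by auto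
    show "E i * (E j * (Y i * Y j)) + E j * (E i * (Y j * Y i)) = (if i = j then 2 *\<^sub>R - (Y i * Y i) else 0)"
    proof (cases "i = j")
      case True
      then show ?thesis using i by (simp add: clifford_square_left scaleR_2)
    next
      case False
      then show ?thesis by (simp add: clifford_anticommute_left[OF i j False] Y_Y[of j i])
    qed
  qed
  finally show ?thesis by (simp add: sum_negf)
qed

lemma vecx_square: "A \<subseteq> N \<Longrightarrow> x_A A * x_A A = - (\<Sum>i\<in>A. X i * X i)"
  unfolding vecx_op_def by (rule clifford_sum_square) (simp_all add: mult_x_op_commute_E mult_x_op_commute)

lemma dirac_square: "A \<subseteq> N \<Longrightarrow> D_A A * D_A A = - (\<Sum>i\<in>A. T i * T i)"
  unfolding dirac_op_def by (rule clifford_sum_square) (simp_all add: dunkl_op_commute_E dunkl_op_commute)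

lemma grading_commutator_sum:
  assumes A: "A \<subseteq> N"
    and grading_Y: "\<And>k i. grading_op \<mu> k * Y i - Y i * grading_op \<mu> k = (if k = i then c *\<^sub>R Y i else 0)"
  shows "Z_A A * (\<Sum>i\<in>A. E i * Y i) - (\<Sum>i\<in>A. E i * Y i) * Z_A A = c *\<^sub>R (\<Sum>i\<in>A. E i * Y i)"
proof -
  have "Z_A A * (\<Sum>i\<in>A. E i * Y i) - (\<Sum>i\<in>A. E i * Y i) * Z_A A
      = (\<Sum>k\<in>A. \<Sum>i\<in>A. grading_op \<mu> k * (E i * Y i) - E i * Y i * grading_op \<mu> k)"
    unfolding sum_product by (subst (2) sum.swap) (simp add: sum_subtractf)
  also have "\<dots> = (\<Sum>k\<in>A. c *\<^sub>R (E k * Y k))"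
  proof (rule sum_sum_diagonal[OF finite_subset_N[OF A]])
    fix k i assume "k \<in> A" "i \<in> A"
    then have i: "i \<in> N" using A by auto
    have "grading_op \<mu> k * (E i * Y i) - E i * Y i * grading_op \<mu> k
        = E i * (grading_op \<mu> k * Y i - Y i * grading_op \<mu> k)"
      by (simp add: mult.assoc[symmetric] grading_op_commute_E[OF i]) (simp add: mult.assoc right_diff_distrib)
    then show "grading_op \<mu> k * (E i * Y i) - E i * Y i * grading_op \<mu> k = (if k = i then c *\<^sub>R (E k * Y k) else 0)"
      by (simp add: grading_Y)
  qed
  finally show ?thesis by (simp add: scaleR_sum_right)
qed

lemma grading_vecx: "A \<subseteq> N \<Longrightarrow> Z_A A * x_A A - x_A A * Z_A A = - (2 *\<^sub>R x_A A)"
  unfolding vecx_op_def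
  by (subst grading_commutator_sum[where c = "-2"])
    (simp_all add: grading_op_mult_x_op grading_op_mult_x_op_commute)

lemma grading_dirac: "A \<subseteq> N \<Longrightarrow> Z_A A * D_A A - D_A A * Z_A A = 2 *\<^sub>R D_A A"
  unfolding dirac_op_def
  by (subst grading_commutator_sum[where c = 2])
    (simp_all add: grading_op_dunkl_op grading_op_dunkl_op_commute)

lemma scasimir_osp12:
  assumes "A \<subseteq> N"
  shows "S_A A * x_A A = - (x_A A * S_A A)" and "S_A A * D_A A = - (D_A A * S_A A)"
    and "S_A A * S_A A = 2 *\<^sub>R S_A A + (Z_A A + 2 *\<^sub>R 1) * (Z_A A + 2 *\<^sub>R 1) - 1
      - 4 *\<^sub>R (x_A A * (x_A A * (D_A A * D_A A)))"
proof -
  have D_x: "D_A A * x_A A = Z_A A - x_A A * D_A A"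
    using vecx_dirac_anticommutator[OF assms] by (simp add: algebra_simps)
  have x_Z: "x_A A * Z_A A = Z_A A * x_A A + 2 *\<^sub>R x_A A"
    using grading_vecx[OF assms] by (simp add: algebra_simps)
  have D_Z: "D_A A * Z_A A = Z_A A * D_A A - 2 *\<^sub>R D_A A"
    using grading_dirac[OF assms] by (simp add: algebra_simps)
  show "S_A A * x_A A = - (x_A A * S_A A)" "S_A A * D_A A = - (D_A A * S_A A)"
    "S_A A * S_A A = 2 *\<^sub>R S_A A + (Z_A A + 2 *\<^sub>R 1) * (Z_A A + 2 *\<^sub>R 1) - 1
      - 4 *\<^sub>R (x_A A * (x_A A * (D_A A * D_A A)))"
    unfolding scasimir_op_def using osp12_scasimir[OF D_x x_Z D_Z] by auto
qed

definition pair_term :: "nat \<Rightarrow> nat \<Rightarrow> 'v linop" where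
  "pair_term k l = 4 *\<^sub>R (E k * (E l * (X k * T l))) + grading_op \<mu> k * grading_op \<mu> l
     - 4 *\<^sub>R (X k * (X k * (T l * T l)))"

lemma scasimir_square_pair_sum:
  assumes "A \<subseteq> N"
  shows "S_A A * S_A A = (\<Sum>k\<in>A. \<Sum>l\<in>A. pair_term k l) + (\<Sum>k\<in>A. 2 *\<^sub>R grading_op \<mu> k) + 1"
proof -
  have D_x: "D_A A * x_A A = Z_A A - x_A A * D_A A"
    using vecx_dirac_anticommutator[OF assms] by (simp add: algebra_simps)
  have "S_A A * S_A A = 4 *\<^sub>R (x_A A * D_A A) + Z_A A * Z_A A + 2 *\<^sub>R Z_A A + 1
      - 4 *\<^sub>R (x_A A * (x_A A * (D_A A * D_A A)))"
    unfolding scasimir_osp12(3)[OF assms] unfolding scasimir_op_def D_x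
    by (simp add: algebra_simps scaleR_2 scaleR_four)
  also have "x_A A * (x_A A * (D_A A * D_A A)) = (\<Sum>k\<in>A. \<Sum>l\<in>A. X k * (X k * (T l * T l)))"
    by (simp add: mult.assoc[symmetric])
      (simp add: vecx_square[OF assms] dirac_square[OF assms] mult.assoc sum_product)
  also have "Z_A A * Z_A A = (\<Sum>k\<in>A. \<Sum>l\<in>A. grading_op \<mu> k * grading_op \<mu> l)"
    by (rule sum_product)
  also have "x_A A * D_A A = (\<Sum>k\<in>A. \<Sum>l\<in>A. E k * (E l * (X k * T l)))"
    by (rule vecx_dirac_expand[OF assms])
  finally show ?thesis
    by (simp add: pair_term_def sum.distrib sum_subtractf scaleR_sum_right algebra_simps)
qed

lemma pair_term_diagonal:
  assumes "k \<in> N"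
  shows "pair_term k k + 2 *\<^sub>R grading_op \<mu> k = (4 * (\<mu> k * \<mu> k) - 1) *\<^sub>R 1"
  using assms
  by (simp add: pair_term_def grading_op_eq clifford_square_left algebra_simps dunkl_mult_x_op_same
      dunkl_mult_x_op_same_left refl_mult_x_op_anticommute refl_mult_x_op_anticommute_left
      refl_dunkl_op_anticommute refl_dunkl_op_anticommute_left refl_op_square refl_op_square_left
      scaleR_2 scaleR_four scaleR_diff_left)
    (simp add: scaleR_add_left[symmetric])

lemma sum_scasimir_squares: "\<exists>c. (\<Sum>B\<in>two_subsets n. S_A B * S_A B) = S_A N * S_A N + c *\<^sub>R 1"
proof -
  define P where "P = (\<Sum>k\<in>N. \<Sum>l\<in>N. pair_term k l)"
  define P_diag where "P_diag = (\<Sum>k\<in>N. pair_term k k)"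
  define Z2 :: "'v linop" where "Z2 = (\<Sum>k\<in>N. 2 *\<^sub>R grading_op \<mu> k)"
  define c where "c = (\<Sum>k\<in>N. 4 * (\<mu> k * \<mu> k) - 1)"
  have "(\<Sum>B\<in>two_subsets n. S_A B * S_A B)
      = (\<Sum>B\<in>two_subsets n. (\<Sum>k\<in>B. \<Sum>l\<in>B. pair_term k l) + (\<Sum>k\<in>B. 2 *\<^sub>R grading_op \<mu> k) + 1)"
    by (intro sum.cong refl scasimir_square_pair_sum) (auto simp: two_subsets_def)
  also have "\<dots> = P + (real n - 2) *\<^sub>R P_diag + (real n - 1) *\<^sub>R Z2 + real (card (two_subsets n)) *\<^sub>R 1"
    by (simp add: sum.distrib sum_two_subsets_sum sum_two_subsets_double_sum P_def P_diag_def Z2_def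
        sum_constant_scaleR)
  also have "P_diag = c *\<^sub>R 1 - Z2"
  proof -
    have "P_diag + Z2 = (\<Sum>k\<in>N. (4 * (\<mu> k * \<mu> k) - 1) *\<^sub>R 1)"
      unfolding P_diag_def Z2_def sum.distrib[symmetric] by (intro sum.cong refl pair_term_diagonal)
    then show ?thesis by (simp add: c_def scaleR_sum_left algebra_simps)
  qed
  also have "P = S_A N * S_A N - Z2 - 1"
    by (simp add: scasimir_square_pair_sum P_def Z2_def)
  finally have "(\<Sum>B\<in>two_subsets n. S_A B * S_A B)
      = S_A N * S_A N + ((real n - 2) * c + real (card (two_subsets n)) - 1) *\<^sub>R 1"
    by (simp add: algebra_simps scaleR_add_left scaleR_2)
  then show ?thesis by blast
qed

lemma clifford_sums_anticommute:
  assumes A: "A \<subseteq> N" and C: "C \<subseteq> N" and disjoint: "A \<inter> C = {}"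
    and Y_E: "\<And>i j. i \<in> N \<Longrightarrow> Y j * E i = E i * Y j"
    and Y'_E: "\<And>i j. i \<in> N \<Longrightarrow> Y' j * E i = E i * Y' j"
    and Y_Y': "\<And>i j. i \<in> A \<Longrightarrow> j \<in> C \<Longrightarrow> Y i * Y' j = Y' j * Y i"
  shows "(\<Sum>i\<in>A. E i * Y i) * (\<Sum>j\<in>C. E j * Y' j) = - ((\<Sum>j\<in>C. E j * Y' j) * (\<Sum>i\<in>A. E i * Y i))"
proof -
  have "(\<Sum>i\<in>A. E i * Y i) * (\<Sum>j\<in>C. E j * Y' j) = (\<Sum>i\<in>A. \<Sum>j\<in>C. E i * (E j * (Y i * Y' j)))"
    unfolding sum_product
  proof (intro sum.cong refl)
    fix i j assume "i \<in> A" "j \<in> C"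
    then have "j \<in> N" using C by auto
    then show "E i * Y i * (E j * Y' j) = E i * (E j * (Y i * Y' j))"
      by (simp add: mult.assoc Y_E[THEN mult_assoc_rule, unfolded mult.assoc])
  qed
  also have "\<dots> = (\<Sum>j\<in>C. \<Sum>i\<in>A. - (E j * Y' j * (E i * Y i)))"
  proof (subst sum.swap, intro sum.cong refl)
    fix i j assume ij: "i \<in> A" "j \<in> C"
    then have i: "i \<in> N" and j: "j \<in> N" and ne: "i \<noteq> j" using A C disjoint by auto
    have "E j * Y' j * (E i * Y i) = E j * (E i * (Y' j * Y i))"
      using i by (simp add: mult.assoc Y'_E[THEN mult_assoc_rule, unfolded mult.assoc])
    also have "\<dots> = - (E i * (E j * (Y i * Y' j)))"
      by (simp add: clifford_anticommute_left[OF i j ne] Y_Y'[OF ij])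
    finally have "E j * Y' j * (E i * Y i) = - (E i * (E j * (Y i * Y' j)))" .
    then show "E i * (E j * (Y i * Y' j)) = - (E j * Y' j * (E i * Y i))" by simp
  qed
  also have "\<dots> = - ((\<Sum>j\<in>C. E j * Y' j) * (\<Sum>i\<in>A. E i * Y i))"
    unfolding sum_product by (simp add: sum_negf)
  finally show ?thesis .
qed

lemma vecx_dirac_anticommute_disjoint:
  assumes A: "A \<subseteq> N" and C: "C \<subseteq> N" and disjoint: "A \<inter> C = {}"
  shows "x_A A * x_A C = - (x_A C * x_A A)" and "D_A A * x_A C = - (x_A C * D_A A)"
    and "x_A A * D_A C = - (D_A C * x_A A)" and "D_A A * D_A C = - (D_A C * D_A A)"
proof -
  have ne: "i \<noteq> j" "j \<noteq> i" if "i \<in> A" "j \<in> C" for i j using that disjoint by auto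
  show "x_A A * x_A C = - (x_A C * x_A A)" unfolding vecx_op_def
    by (rule clifford_sums_anticommute[OF A C disjoint]) (simp_all add: mult_x_op_commute_E mult_x_op_commute)
  show "D_A A * x_A C = - (x_A C * D_A A)" unfolding vecx_op_def dirac_op_def
    by (rule clifford_sums_anticommute[OF A C disjoint])
      (simp_all add: mult_x_op_commute_E dunkl_op_commute_E dunkl_mult_x_op_commute ne)
  show "x_A A * D_A C = - (D_A C * x_A A)" unfolding vecx_op_def dirac_op_def
    by (rule clifford_sums_anticommute[OF A C disjoint])
      (simp_all add: mult_x_op_commute_E dunkl_op_commute_E dunkl_mult_x_op_commute ne)
  show "D_A A * D_A C = - (D_A C * D_A A)" unfolding dirac_op_def
    by (rule clifford_sums_anticommute[OF A C disjoint]) (simp_all add: dunkl_op_commute_E dunkl_op_commute)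
qed

lemma reflA_anticommute_vecx_dirac:
  assumes "A \<subseteq> N"
  shows "reflA_op A * x_A A = - (x_A A * reflA_op A)" and "reflA_op A * D_A A = - (D_A A * reflA_op A)"
proof -
  have "finite A" using finite_subset_N[OF assms] .
  then have "reflA_op A * x_A A = (\<Sum>i\<in>A. - (E i * X i * reflA_op A))"
    unfolding vecx_op_def sum_distrib_left
    by (intro sum.cong refl) (use assms in \<open>auto simp: reflA_op_commute_E_left mult.assoc
        reflA_mult_x_op_anticommute\<close>)
  then show "reflA_op A * x_A A = - (x_A A * reflA_op A)"
    by (simp add: vecx_op_def sum_negf sum_distrib_right)
  have "reflA_op A * D_A A = (\<Sum>i\<in>A. - (E i * T i * reflA_op A))"
    unfolding dirac_op_def sum_distrib_left using \<open>finite A\<close>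
    by (intro sum.cong refl) (use assms in \<open>auto simp: reflA_op_commute_E_left mult.assoc
        reflA_dunkl_op_anticommute\<close>)
  then show "reflA_op A * D_A A = - (D_A A * reflA_op A)"
    by (simp add: dirac_op_def sum_negf sum_distrib_right)
qed

lemma reflA_commute_vecx_dirac_disjoint:
  assumes "C \<subseteq> N" "A \<inter> C = {}"
  shows "reflA_op A * x_A C = x_A C * reflA_op A" and "reflA_op A * D_A C = D_A C * reflA_op A"
proof -
  have commute: "reflA_op A * (E i * X i) = E i * X i * reflA_op A"
    "reflA_op A * (E i * T i) = E i * T i * reflA_op A" if "i \<in> C" for i
  proof -
    have "i \<in> N" "i \<notin> A" using that assms by auto
    then show "reflA_op A * (E i * X i) = E i * X i * reflA_op A"
      "reflA_op A * (E i * T i) = E i * T i * reflA_op A"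
      by (simp_all add: reflA_op_commute_E_left reflA_mult_x_op_commute reflA_dunkl_op_commute mult.assoc)
  qed
  show "reflA_op A * x_A C = x_A C * reflA_op A"
    unfolding vecx_op_def sum_distrib_left sum_distrib_right by (intro sum.cong refl commute)
  show "reflA_op A * D_A C = D_A C * reflA_op A"
    unfolding dirac_op_def sum_distrib_left sum_distrib_right by (intro sum.cong refl commute)
qed

lemma scasimir_commute_vecx_dirac_disjoint:
  assumes A: "A \<subseteq> N" and C: "C \<subseteq> N" and disjoint: "A \<inter> C = {}"
  shows "S_A A * x_A C = x_A C * S_A A" and "S_A A * D_A C = D_A C * S_A A"
proof -
  note anti = vecx_dirac_anticommute_disjoint[OF A C disjoint]
  note anti_left = anti[THEN mult_assoc_rule, unfolded mult.assoc]
  show "S_A A * x_A C = x_A C * S_A A" "S_A A * D_A C = D_A C * S_A A"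
    unfolding scasimir_op_def by (simp_all add: algebra_simps anti anti_left)
qed

lemma reflA_commute_scasimir: "A \<subseteq> N \<Longrightarrow> reflA_op A * S_A A = S_A A * reflA_op A"
  using reflA_anticommute_vecx_dirac reflA_anticommute_vecx_dirac[THEN mult_assoc_rule, unfolded mult.assoc]
  by (simp add: scasimir_op_def algebra_simps)

lemma Gamma_op_commute_vecx_dirac:
  assumes A: "A \<subseteq> N"
  shows "Gamma_op \<mu> e A * x_A N = x_A N * Gamma_op \<mu> e A"
    and "Gamma_op \<mu> e A * D_A N = D_A N * Gamma_op \<mu> e A"
proof -
  have C: "N - A \<subseteq> N" and disjoint: "A \<inter> (N - A) = {}" by auto
  have x_split: "x_A N = x_A (N - A) + x_A A"
    unfolding vecx_op_def by (rule sum.subset_diff[OF A]) simp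
  have D_split: "D_A N = D_A (N - A) + D_A A"
    unfolding dirac_op_def by (rule sum.subset_diff[OF A]) simp
  note rules = reflA_anticommute_vecx_dirac[OF A] reflA_commute_vecx_dirac_disjoint[OF C disjoint]
    scasimir_osp12(1,2)[OF A] scasimir_commute_vecx_dirac_disjoint[OF A C disjoint]
  note rules_left = rules[THEN mult_assoc_rule, unfolded mult.assoc]
  show "Gamma_op \<mu> e A * x_A N = x_A N * Gamma_op \<mu> e A"
    "Gamma_op \<mu> e A * D_A N = D_A N * Gamma_op \<mu> e A"
    unfolding Gamma_op_def x_split D_split by (simp_all add: algebra_simps rules rules_left del: One_nat_def)
qed

lemma Gamma_op_commute_scasimir_square:
  assumes "A \<subseteq> N"
  shows "Gamma_op \<mu> e A * (S_A N * S_A N) = S_A N * S_A N * Gamma_op \<mu> e A"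
proof -
  note rules = Gamma_op_commute_vecx_dirac[OF assms]
  note rules_left = rules[THEN mult_assoc_rule, unfolded mult.assoc]
  have "Gamma_op \<mu> e A * S_A N = S_A N * Gamma_op \<mu> e A"
    unfolding scasimir_op_def[of \<mu> e N] by (simp add: algebra_simps rules rules_left del: One_nat_def)
  then show ?thesis by (metis mult.assoc)
qed

lemma Gamma_op_square: "B \<subseteq> N \<Longrightarrow> Gamma_op \<mu> e B * Gamma_op \<mu> e B = (1/4::real) *\<^sub>R (S_A B * S_A B)"
  by (simp add: Gamma_op_def mult.assoc reflA_commute_scasimir[THEN mult_assoc_rule, unfolded mult.assoc]
      reflA_op_square)

lemma Q_op_commute_Gamma_op:
  assumes "A \<subseteq> N"
  shows "Q_op \<mu> e n * Gamma_op \<mu> e A = Gamma_op \<mu> e A * Q_op \<mu> e n"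
proof -
  obtain c where c: "(\<Sum>B\<in>two_subsets n. S_A B * S_A B) = S_A N * S_A N + c *\<^sub>R 1"
    using sum_scasimir_squares by blast
  have "Q_op \<mu> e n = (1/4::real) *\<^sub>R (\<Sum>B\<in>two_subsets n. S_A B * S_A B)"
    unfolding Q_op_def scaleR_sum_right by (intro sum.cong refl Gamma_op_square) (auto simp: two_subsets_def)
  then have Q: "Q_op \<mu> e n = (1/4::real) *\<^sub>R (S_A N * S_A N + c *\<^sub>R 1)"
    by (simp add: c)
  show ?thesis
    unfolding Q by (simp add: algebra_simps Gamma_op_commute_scasimir_square[OF assms] del: One_nat_def)
qed

lemma apply_vecx_op: "A \<subseteq> N \<Longrightarrow> apply_linop (x_A A) = vecx e A"
  unfolding vecx_op_def vecx_def
  by (intro ext, unfold apply_linop_sum, intro sum.cong refl)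
    (auto simp: apply_linop_times apply_pointwise_op linear_e_i mult_x_op.rep_eq)

lemma apply_dirac_op: "A \<subseteq> N \<Longrightarrow> apply_linop (D_A A) = dirac \<mu> e A"
  unfolding dirac_op_def dirac_def
  by (intro ext, unfold apply_linop_sum, intro sum.cong refl)
    (auto simp: apply_linop_times apply_pointwise_op linear_e_i dunkl_op.rep_eq)

lemma apply_Gamma_op: "A \<subseteq> N \<Longrightarrow> apply_linop (Gamma_op \<mu> e A) F = GammaA \<mu> e A F"
  unfolding Gamma_op_def scasimir_op_def GammaA_def SA_def
  by (simp add: scaleR_linop.rep_eq apply_linop_times minus_linop.rep_eq one_linop.rep_eq reflA_op.rep_eq
      apply_vecx_op apply_dirac_op)

lemma apply_Q_op: "apply_linop (Q_op \<mu> e n) F = Qn \<mu> e n F"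
  unfolding Q_op_def Qn_def two_subsets_def
  by (intro ext, unfold apply_linop_sum, intro sum.cong refl) (auto simp: apply_linop_times apply_Gamma_op)

end

text \<open>The identity holds for every coefficient function.\<close>

theorem lemma7:
  fixes n :: nat and \<mu> :: "nat \<Rightarrow> real" and e :: "nat \<Rightarrow> 'v::real_vector \<Rightarrow> 'v"
    and A :: "nat set" and F :: "'v pv"
  assumes "n \<ge> 1"
    and "\<forall>i\<in>{1..n}. \<mu> i > 0"
    and "\<forall>i\<in>{1..n}. linear (e i)"
    and "\<forall>i\<in>{1..n}. \<forall>j\<in>{1..n}. \<forall>v. e i (e j v) + e j (e i v) = (if i = j then (-2) *\<^sub>R v else 0)"
    and "A \<subseteq> {1..n}"
    and "is_poly n F"
  shows "Qn \<mu> e n (GammaA \<mu> e A F) = GammaA \<mu> e A (Qn \<mu> e n F)"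
proof -
  interpret clifford_dunkl \<mu> e n
    using assms(3,4) by unfold_locales
  have "Qn \<mu> e n (GammaA \<mu> e A F) = apply_linop (Q_op \<mu> e n * Gamma_op \<mu> e A) F"
    by (simp add: apply_linop_times apply_Gamma_op[OF assms(5)] apply_Q_op)
  also have "\<dots> = apply_linop (Gamma_op \<mu> e A * Q_op \<mu> e n) F"
    by (simp add: Q_op_commute_Gamma_op[OF assms(5)])
  also have "\<dots> = GammaA \<mu> e A (Qn \<mu> e n F)"
    by (simp add: apply_linop_times apply_Gamma_op[OF assms(5)] apply_Q_op)
  finally show ?thesis .
qed

end
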